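(* Let $\alpha\in\mathbb R^n$ be a unit vector and $a_1,\dots,a_r\in\mathbb R$ with $a_1^2+\dots+a_r^2\neq0$, and let $\Gamma=(a_1\alpha\ \cdots\ a_r\alpha)$, so that $\operatorname{tr}(X^T\Gamma)=\langle a_1e_1+\dots+a_re_r,\alpha\rangle$ for $X=(e_1\cdots e_r)$. Take $\kappa=0$. Then the equations $$\dot X=P-XP^TX,\qquad \dot P=PX^TP-\Gamma+X\Lambda,\qquad \Lambda=\tfrac12\left(-2P^TP+X^T\Gamma+\Gamma^TX\right)$$ on $T^*V(n,r)$ imply the matrix equations $$\frac{d}{dt}\tilde L(\lambda)=[\tilde L(\lambda),\tilde A(\lambda)],\qquad\lambda\in\mathbb R,$$ where, with $\Phi=PX^T-XP^T$ and $x=a_1e_1+\dots+a_re_r$, the matrices $\tilde L(\lambda),\tilde A(\lambda)\in so(n+1)$ are $$\tilde L(\lambda)=\begin{pmatrix}-\lambda\Phi & x+\lambda^2\alpha\\ -x^T-\lambda^2\alpha^T&0\end{pmatrix},\qquad \tilde A(\lambda)=\begin{pmatrix}-\Phi&\lambda\alpha\\-\lambda\alpha^T&0\end{pmatrix}.$$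
   Context: $V(n,r)=\{X\in M_{n,r}(\mathbb R):X^TX=\mathbf I_r\}$ with columns $e_1,\dots,e_r$, and $T^*V(n,r)$ is realized as the set of pairs $(X,P)$ of real $n\times r$ matrices with $X^TX=\mathbf I_r$, $X^TP+P^TX=0$. The given equations are the Hamiltonian flow of $\frac12\operatorname{tr}(P^TP)-\frac12\operatorname{tr}((XP^T)^2)+\operatorname{tr}(X^T\Gamma)$ (the pendulum with normal metric, $\kappa=0$). *)

theory Defs
  imports "HOL-Analysis.Analysis"
begin

text \<open>Real (n+1) x (n+1) matrices are indexed by the type 'n option: Some i is the
  i-th of the first n indices, None is the extra last index.
  skew_block M v is the block matrix [[M, v], [-v^T, 0]].\<close>

definition skew_block :: "real^'n^'n \<Rightarrow> real^'n \<Rightarrow> real^('n option)^('n option)" where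
  "skew_block M v = (\<chi> i j. (case i of
       Some i' \<Rightarrow> (case j of Some j' \<Rightarrow> M $ i' $ j' | None \<Rightarrow> v $ i')
     | None \<Rightarrow> (case j of Some j' \<Rightarrow> - (v $ j') | None \<Rightarrow> 0)))"

definition Gamma_mat :: "real^'n \<Rightarrow> real^'r \<Rightarrow> real^'r^'n" where
  "Gamma_mat \<alpha> a = (\<chi> i j. \<alpha> $ i * a $ j)"

definition Phi_mat :: "real^'r^'n \<Rightarrow> real^'r^'n \<Rightarrow> real^'n^'n" where
  "Phi_mat X P = P ** transpose X - X ** transpose P"

definition Ltilde :: "real \<Rightarrow> real^'r^'n \<Rightarrow> real^'r^'n \<Rightarrow> real^'n \<Rightarrow> real^'r
    \<Rightarrow> real^('n option)^('n option)" where
  "Ltilde lam X P \<alpha> a = skew_block (- (lam *\<^sub>R Phi_mat X P)) (X *v a + lam\<^sup>2 *\<^sub>R \<alpha>)"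

definition Atilde :: "real \<Rightarrow> real^'r^'n \<Rightarrow> real^'r^'n \<Rightarrow> real^'n
    \<Rightarrow> real^('n option)^('n option)" where
  "Atilde lam X P \<alpha> = skew_block (- Phi_mat X P) (lam *\<^sub>R \<alpha>)"

end

theory Submission
  imports Defs
begin

text \<open>
  Along the flow, \<open>\<Phi>' = x \<alpha>\<^sup>T - \<alpha> x\<^sup>T\<close>: the terms containing \<open>\<Lambda>\<close> cancel because
  \<open>\<Lambda>\<close> is symmetric. Moreover \<open>X' = \<Phi> X\<close> once \<open>X\<^sup>T X = 1\<close>, hence \<open>x' = \<Phi> x\<close>.
  The commutator of two bordered matrices \<open>[[M, u], [-u\<^sup>T, 0]]\<close> and \<open>[[N, v], [-v\<^sup>T, 0]]\<close>
  with \<open>M, N\<close> skew is again bordered, with blocks \<open>[M, N] + v u\<^sup>T - u v\<^sup>T\<close> and \<open>M v - N u\<close>.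
  For \<open>L(\<lambda>)\<close> and \<open>A(\<lambda>)\<close> the bracket \<open>[\<lambda>\<Phi>, \<Phi>]\<close> and the \<open>\<alpha> \<alpha>\<^sup>T\<close> terms cancel, leaving
  \<open>-\<lambda>\<Phi>'\<close> and \<open>\<Phi> x\<close>.
\<close>

lemma matrix_diff_ldistrib: "A ** (B - C) = A ** B - A ** C"
  for A :: "'a::ring_1^'n^'m"
  by (simp add: vec_eq_iff matrix_matrix_mult_def sum_subtractf algebra_simps)

lemma matrix_diff_rdistrib: "(A - B) ** C = A ** C - B ** C"
  for A :: "'a::ring_1^'n^'m"
  by (simp add: vec_eq_iff matrix_matrix_mult_def sum_subtractf algebra_simps)

lemma matrix_add_rdistrib: "(A + B) ** C = A ** C + B ** C"
  for A :: "'a::semiring_1^'n^'m"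
  by (simp add: vec_eq_iff matrix_matrix_mult_def sum.distrib algebra_simps)

lemma matrix_minus_left: "(- A) ** B = - (A ** B)"
  for A :: "'a::ring_1^'n^'m"
  by (simp add: vec_eq_iff matrix_matrix_mult_def sum_negf)

lemma matrix_minus_right: "A ** (- B) = - (A ** B)"
  for A :: "'a::ring_1^'n^'m"
  by (simp add: vec_eq_iff matrix_matrix_mult_def sum_negf)

lemma transpose_add: "transpose (A + B) = transpose A + transpose B"
  for A :: "'a::plus^'n^'m"
  by (simp add: vec_eq_iff transpose_def)

lemma transpose_diff: "transpose (A - B) = transpose A - transpose B"
  for A :: "'a::minus^'n^'m"
  by (simp add: vec_eq_iff transpose_def)

lemma transpose_minus: "transpose (- A) = - transpose A"
  for A :: "'a::uminus^'n^'m"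
  by (simp add: vec_eq_iff transpose_def)

lemmas matrix_ring_simps =
  matrix_add_ldistrib matrix_add_rdistrib matrix_diff_ldistrib matrix_diff_rdistrib
  matrix_minus_left matrix_minus_right matrix_scalar_ac scalar_matrix_assoc[symmetric]
  transpose_add transpose_diff transpose_minus transpose_scalar
  matrix_transpose_mul matrix_mul_assoc

lemma bounded_bilinear_matrix_matrix_mult:
  "bounded_bilinear ((**) :: real^'n^'m \<Rightarrow> real^'p^'n \<Rightarrow> real^'p^'m)"
  unfolding bilinear_conv_bounded_bilinear[symmetric] bilinear_def linear_iff
  by (simp add: matrix_ring_simps)

lemma bounded_linear_transpose: "bounded_linear (transpose :: real^'n^'m \<Rightarrow> real^'m^'n)"
  by (rule bounded_linearI') (simp_all add: matrix_ring_simps)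

lemma bounded_linear_matrix_vector_mult_left:
  "bounded_linear (\<lambda>M :: real^'n^'m. M *v v)"
  by (rule bounded_linearI')
    (auto simp: matrix_vector_mult_def vec_eq_iff sum.distrib sum_distrib_left algebra_simps)

lemma bounded_linear_skew_block:
  "bounded_linear (\<lambda>(M, v). skew_block M v :: real^('n::finite option)^('n option))"
  by (rule bounded_linearI') (auto simp: skew_block_def vec_eq_iff split: option.split)

lemma has_vector_derivative_skew_block:
  assumes "(M has_vector_derivative M') (at t within S)"
    and "(v has_vector_derivative v') (at t within S)"
  shows "((\<lambda>s. skew_block (M s) (v s)) has_vector_derivative skew_block M' v') (at t within S)"
  using bounded_linear.has_vector_derivative
      [OF bounded_linear_skew_block has_vector_derivative_Pair[OF assms]]
  by simp

lemma has_vector_derivative_Phi_mat: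
  assumes "(X has_vector_derivative X') (at t within S)"
    and "(P has_vector_derivative P') (at t within S)"
  shows "((\<lambda>s. Phi_mat (X s) (P s)) has_vector_derivative
            Phi_mat (X t) P' + Phi_mat X' (P t)) (at t within S)"
proof -
  note mult = bounded_bilinear.has_vector_derivative[OF bounded_bilinear_matrix_matrix_mult]
  note tr = bounded_linear.has_vector_derivative[OF bounded_linear_transpose]
  have "((\<lambda>s. Phi_mat (X s) (P s)) has_vector_derivative
          (P t ** transpose X' + P' ** transpose (X t)) - (X t ** transpose P' + X' ** transpose (P t)))
          (at t within S)"
    unfolding Phi_mat_def by (intro has_vector_derivative_diff mult tr assms)
  then show ?thesis by (simp add: Phi_mat_def algebra_simps)
qed

definition outer_prod :: "'a::times^'n \<Rightarrow> 'a^'m \<Rightarrow> 'a^'m^'n" where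
  "outer_prod u v = (\<chi> i j. u $ i * v $ j)"

lemma matrix_mult_transpose_Gamma_mat:
  "X ** transpose (Gamma_mat \<alpha> a) = outer_prod (X *v a) \<alpha>"
  by (simp add: vec_eq_iff matrix_matrix_mult_def transpose_def Gamma_mat_def outer_prod_def
      matrix_vector_mult_def sum_distrib_left mult_ac)

lemma Gamma_mat_mult_transpose:
  "Gamma_mat \<alpha> a ** transpose X = outer_prod \<alpha> (X *v a)"
  by (simp add: vec_eq_iff matrix_matrix_mult_def transpose_def Gamma_mat_def outer_prod_def
      matrix_vector_mult_def sum_distrib_left mult_ac)

lemma transpose_Phi_mat: "transpose (Phi_mat X P) = - Phi_mat X P"
  by (simp add: Phi_mat_def matrix_ring_simps)

lemma Phi_mat_mult_Stiefel:
  assumes "transpose X ** X = mat 1"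
  shows "Phi_mat X P ** X = P - X ** transpose P ** X"
  by (simp add: Phi_mat_def matrix_diff_rdistrib matrix_mul_assoc[symmetric] assms)

lemma Phi_mat_along_flow:
  fixes X P G :: "real^'r^'n"
  shows "Phi_mat X (P ** transpose X ** P - G
            + X ** ((1/2) *\<^sub>R (- 2 *\<^sub>R (transpose P ** P) + transpose X ** G + transpose G ** X)))
         + Phi_mat (P - X ** transpose P ** X) P
       = X ** transpose G - G ** transpose X"
  unfolding Phi_mat_def by (simp add: matrix_ring_simps algebra_simps)

lemma sum_UNIV_option:
  "(\<Sum>k\<in>UNIV. f k) = f None + (\<Sum>k\<in>UNIV. f (Some k))" for f :: "'a::finite option \<Rightarrow> 'b::comm_monoid_add"
  by (simp add: UNIV_option_conv sum.reindex)

lemma skew_block_commutator: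
  fixes M N :: "real^'n^'n"
  assumes "transpose M = - M" and "transpose N = - N"
  shows "skew_block M u ** skew_block N v - skew_block N v ** skew_block M u
       = skew_block (M ** N - N ** M + outer_prod v u - outer_prod u v) (M *v v - N *v u)"
proof -
  have skM: "M $ j $ i = - M $ i $ j" and skN: "N $ j $ i = - N $ i $ j" for i j
    using arg_cong[OF assms(1), of "\<lambda>A. A $ i $ j"] arg_cong[OF assms(2), of "\<lambda>A. A $ i $ j"]
    by (simp_all add: transpose_def)
  note entries = skew_block_def matrix_matrix_mult_def matrix_vector_mult_def outer_prod_def
    sum_UNIV_option sum_subtractf sum_negf sum.distrib algebra_simps
  show ?thesis
    unfolding vec_eq_iff
  proof (intro allI)
    fix i j :: "'n option"
    show "(skew_block M u ** skew_block N v - skew_block N v ** skew_block M u) $ i $ j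
        = skew_block (M ** N - N ** M + outer_prod v u - outer_prod u v) (M *v v - N *v u) $ i $ j"
    proof (cases i; cases j)
      fix j' assume "i = None" "j = Some j'"
      then show ?thesis by (simp add: entries skM[of j'] skN[of j'])
    qed (simp_all add: entries)
  qed
qed

lemma Ltilde_Atilde_commutator:
  "Ltilde lam X P \<alpha> a ** Atilde lam X P \<alpha> - Atilde lam X P \<alpha> ** Ltilde lam X P \<alpha> a
    = skew_block (- (lam *\<^sub>R (outer_prod (X *v a) \<alpha> - outer_prod \<alpha> (X *v a))))
        (Phi_mat X P *v (X *v a))"
proof -
  define \<Phi> where "\<Phi> = Phi_mat X P"
  define x where "x = X *v a"
  have "Ltilde lam X P \<alpha> a ** Atilde lam X P \<alpha> - Atilde lam X P \<alpha> ** Ltilde lam X P \<alpha> a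
      = skew_block ((- (lam *\<^sub>R \<Phi>)) ** (- \<Phi>) - (- \<Phi>) ** (- (lam *\<^sub>R \<Phi>))
            + outer_prod (lam *\<^sub>R \<alpha>) (x + lam\<^sup>2 *\<^sub>R \<alpha>) - outer_prod (x + lam\<^sup>2 *\<^sub>R \<alpha>) (lam *\<^sub>R \<alpha>))
          ((- (lam *\<^sub>R \<Phi>)) *v (lam *\<^sub>R \<alpha>) - (- \<Phi>) *v (x + lam\<^sup>2 *\<^sub>R \<alpha>))"
    unfolding Ltilde_def Atilde_def \<Phi>_def[symmetric] x_def[symmetric]
    by (rule skew_block_commutator)
      (simp_all add: \<Phi>_def transpose_Phi_mat transpose_scalar transpose_minus)
  also have "\<dots> = skew_block (- (lam *\<^sub>R (outer_prod x \<alpha> - outer_prod \<alpha> x))) (\<Phi> *v x)"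
    by (intro arg_cong2[where f = skew_block])
      (simp_all add: vec_eq_iff outer_prod_def matrix_ring_simps matrix_vector_mult_def
        sum_distrib_left sum_subtractf sum_negf algebra_simps power2_eq_square)
  finally show ?thesis by (simp add: \<Phi>_def x_def)
qed

theorem theorem5:
  fixes X P :: "real \<Rightarrow> real^'r^'n" and \<alpha> :: "real^'n" and a :: "real^'r"
    and T :: "real set"
  assumes "open T"
    and "norm \<alpha> = 1"
    and "(\<Sum>j\<in>UNIV. (a $ j)\<^sup>2) \<noteq> 0"
    and "\<And>t. t \<in> T \<Longrightarrow> transpose (X t) ** X t = mat 1"
    and "\<And>t. t \<in> T \<Longrightarrow> transpose (X t) ** P t + transpose (P t) ** X t = 0"
    and "\<And>t. t \<in> T \<Longrightarrow>
           (X has_vector_derivative (P t - X t ** transpose (P t) ** X t)) (at t)"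
    and "\<And>t. t \<in> T \<Longrightarrow>
           (P has_vector_derivative
              (P t ** transpose (X t) ** P t - Gamma_mat \<alpha> a
               + X t ** ((1/2) *\<^sub>R (- 2 *\<^sub>R (transpose (P t) ** P t)
                   + transpose (X t) ** Gamma_mat \<alpha> a + transpose (Gamma_mat \<alpha> a) ** X t))))
            (at t)"
  shows "\<And>lam t. t \<in> T \<Longrightarrow>
           ((\<lambda>s. Ltilde lam (X s) (P s) \<alpha> a) has_vector_derivative
              (Ltilde lam (X t) (P t) \<alpha> a ** Atilde lam (X t) (P t) \<alpha>
               - Atilde lam (X t) (P t) \<alpha> ** Ltilde lam (X t) (P t) \<alpha> a)) (at t)"
proof -
  fix lam t assume "t \<in> T"
  define \<Phi> where "\<Phi> = Phi_mat (X t) (P t)"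
  define x where "x = X t *v a"
  have "((\<lambda>s. Phi_mat (X s) (P s)) has_vector_derivative X t ** transpose (Gamma_mat \<alpha> a)
          - Gamma_mat \<alpha> a ** transpose (X t)) (at t)"
    using has_vector_derivative_Phi_mat[OF assms(6,7)[OF \<open>t \<in> T\<close>]]
    unfolding Phi_mat_along_flow .
  then have dPhi: "((\<lambda>s. Phi_mat (X s) (P s)) has_vector_derivative
      outer_prod x \<alpha> - outer_prod \<alpha> x) (at t)"
    by (simp add: matrix_mult_transpose_Gamma_mat Gamma_mat_mult_transpose x_def)
  have "(P t - X t ** transpose (P t) ** X t) *v a = \<Phi> *v x"
    by (simp add: \<Phi>_def x_def Phi_mat_mult_Stiefel[OF assms(4)[OF \<open>t \<in> T\<close>]]
        matrix_vector_mul_assoc)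
  then have dx: "((\<lambda>s. X s *v a + lam\<^sup>2 *\<^sub>R \<alpha>) has_vector_derivative \<Phi> *v x) (at t)"
    using bounded_linear.has_vector_derivative
      [OF bounded_linear_matrix_vector_mult_left[of a] assms(6)[OF \<open>t \<in> T\<close>]]
    by (simp add: has_vector_derivative_add_const)
  have dL: "((\<lambda>s. Ltilde lam (X s) (P s) \<alpha> a) has_vector_derivative
      skew_block (- (lam *\<^sub>R (outer_prod x \<alpha> - outer_prod \<alpha> x))) (\<Phi> *v x)) (at t)"
    unfolding Ltilde_def
    by (intro has_vector_derivative_skew_block has_vector_derivative_minus dx
        bounded_linear.has_vector_derivative[OF bounded_linear_scaleR_right dPhi])
  show "((\<lambda>s. Ltilde lam (X s) (P s) \<alpha> a) has_vector_derivative
      Ltilde lam (X t) (P t) \<alpha> a ** Atilde lam (X t) (P t) \<alpha>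
        - Atilde lam (X t) (P t) \<alpha> ** Ltilde lam (X t) (P t) \<alpha> a) (at t)"
    using dL by (simp add: Ltilde_Atilde_commutator \<Phi>_def x_def)
qed

end
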